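(* Let $q,r$ be integers with $1\le q\le r$ and set $N=2^{r-q}$. Define the $1$-periodic function $f_r(\varphi)=2^{-r}\frac{\sin^2(\pi 2^r\varphi)}{\sin^2(\pi\varphi)}$ (extended continuously by $f_r(\varphi)=2^r$ at integer $\varphi$), and $$F_{r,q}(\varphi)=2^{q-r}\sum_{k=0}^{N} f_r\!\left(\varphi-k\,2^{-r}\right),\qquad G_q(\varphi)=\begin{cases}2^q,& 0\le\varphi<2^{-q},\\ 0,& 2^{-q}\le \varphi\le 1.\end{cases}$$ Then $$\int_0^1\left|F_{r,q}(\varphi)-G_q(\varphi)\right|\,d\varphi\le 2^{q-r+2}\left(1+\frac{\ln(2^{r-q})}{\pi^2}\right).$$
   Context: $f_r(\varphi)=2^r|\alpha_0(\varphi)|^2$, where $\alpha_s(\varphi)=\frac{1}{2^r}\frac{1-\exp(2\pi i(2^r\varphi-s))}{1-\exp(2\pi i(\varphi-s/2^r))}$ is the amplitude for outcome $s$ of quantum phase estimation with $r$ ancilla qubits on an eigenphase $\varphi$; $F_{r,q}$ describes the (rescaled) weight with which eigenphases are kept when the first $q$ of the $r$ ancilla qubits are measured, and $G_q$ is the corresponding ideal rectangular window. *)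

theory Defs
  imports "HOL-Analysis.Analysis"
begin

text \<open>Fejer-type kernel of phase estimation with r ancilla qubits, 1-periodic,
  extended continuously by 2^r at integer arguments.\<close>
definition f_r :: "nat \<Rightarrow> real \<Rightarrow> real" where
  "f_r r \<phi> = (if \<phi> \<in> \<int> then 2 ^ r
     else (sin (pi * 2 ^ r * \<phi>))\<^sup>2 / (2 ^ r * (sin (pi * \<phi>))\<^sup>2))"

definition F_rq :: "nat \<Rightarrow> nat \<Rightarrow> real \<Rightarrow> real" where
  "F_rq r q \<phi> = 2 powr (real q - real r) *
     (\<Sum>k = 0..2 ^ (r - q). f_r r (\<phi> - real k / 2 ^ r))"

definition G_q :: "nat \<Rightarrow> real \<Rightarrow> real" where
  "G_q q \<phi> = (if 0 \<le> \<phi> \<and> \<phi> < 1 / 2 ^ q then 2 ^ q else 0)"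

end

theory Submission
  imports Defs
begin

(*
  The kernel f_r is the Fejer kernel of order n = 2^r: it is the mean of the Dirichlet
  kernels D_0, ..., D_(n-1), and F_rq is (up to the factor 1/N, N = 2^(r-q)) a window of
  N + 1 consecutive translates of it by multiples of 1/n.

  1. From the Dirichlet representation we get continuity and nonnegativity of the
     Fejer kernel, unit mass over a period, and the identity: the n translates by
     multiples of 1/n sum to n.  From the closed form we get the tail bound
     fejer n x <= 1/(n sin^2(pi x)), which integrates via the cotangent.
  2. Hence the window S = N F_rq satisfies S <= n, has integral N + 1 on [0,1], and
     its integral over [N/n, 1] is at most 2 + 2 (1 + ln N)/pi^2 (two translates are
     bounded by their mass, the others by the cotangent estimate and a harmonic sum).
  3. An elementary lemma computes the L1 distance of a function g to the step function
     h 1_[0,W) when g <= h on [0,W) and g >= 0 on [W,1]; applied to g = F_rq with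
     h = 2^q, W = 2^(-q) it reduces the theorem to arithmetic.
*)

lemma sin_add_2pi_multiple: "sin (x + real n * (2 * pi)) = sin x"
proof -
  have "real n * (2 * pi) = 2 * real n * pi" by simp
  then show ?thesis by (simp only: sin_add sin_2npi cos_2npi)
qed

text \<open>Product-to-sum telescoping: the sines of odd multiples sum to a square.\<close>

lemma sum_sin_odd_multiples: "(\<Sum>k<n. sin ((2 * real k + 1) * y) * sin y) = (sin (real n * y))\<^sup>2"
proof (induction n)
  case 0
  then show ?case by simp
next
  case (Suc n)
  have "sin ((2 * real n + 1) * y) * sin y = (cos (2 * (real n * y)) - cos (2 * ((real n + 1) * y))) / 2"
    by (simp add: sin_times_sin algebra_simps)
  moreover have "(sin (real n * y))\<^sup>2 = (1 - cos (2 * (real n * y))) / 2"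
    by (simp add: cos_double_sin)
  moreover have "(sin ((real n + 1) * y))\<^sup>2 = (1 - cos (2 * ((real n + 1) * y))) / 2"
    by (simp add: cos_double_sin)
  ultimately show ?case using Suc by (simp add: add.commute)
qed

text \<open>Multiplying by
  \<open>sin (pi m / n) \<noteq> 0\<close> turns the sum into a telescoping one.\<close>

lemma sum_cos_equispaced:
  assumes "0 < m" "m < n"
  shows "(\<Sum>j<n. cos (2 * pi * real m * (t - real j / real n))) = 0"
proof -
  have n: "real n > 0" using assms by simp
  define a where "a = 2 * pi * real m / real n"
  define \<theta> where "\<theta> = 2 * pi * real m * t"
  define g where "g j = sin (\<theta> - real j * a + a / 2)" for j :: nat
  have telescope: "sin (a / 2) * cos (2 * pi * real m * (t - real j / real n)) = (g j - g (Suc j)) / 2"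
    for j
  proof -
    have arg: "2 * pi * real m * (t - real j / real n) = \<theta> - real j * a"
      using n by (simp add: a_def \<theta>_def field_simps)
    have "a / 2 - (\<theta> - real j * a) = - (\<theta> - real (Suc j) * a + a / 2)"
      by (simp add: algebra_simps)
    then have "sin (a / 2 - (\<theta> - real j * a)) = - g (Suc j)"
      by (simp only: g_def sin_minus)
    moreover have "sin (a / 2) * cos (\<theta> - real j * a)
        = (sin (a / 2 + (\<theta> - real j * a)) + sin (a / 2 - (\<theta> - real j * a))) / 2"
      by (rule sin_times_cos)
    ultimately show ?thesis by (simp add: arg g_def add.commute)
  qed
  have "g n = g 0"
  proof -
    have "real n * a = real m * (2 * pi)" using n by (simp add: a_def)
    then have "\<theta> - real n * a + a / 2 = (\<theta> + a / 2 - real m * (2 * pi))" by simp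
    then have "g n = sin (\<theta> + a / 2 - real m * (2 * pi))" by (simp only: g_def)
    also have "\<dots> = sin (\<theta> + a / 2)"
      using sin_add_2pi_multiple[of "\<theta> + a / 2 - real m * (2 * pi)" m] by simp
    finally show ?thesis by (simp add: g_def)
  qed
  have "sin (a / 2) * (\<Sum>j<n. cos (2 * pi * real m * (t - real j / real n)))
      = (\<Sum>j<n. (g j - g (Suc j)) / 2)"
    by (simp add: sum_distrib_left telescope)
  also have "\<dots> = 0"
    using \<open>g n = g 0\<close> by (simp add: sum_divide_distrib[symmetric] sum_lessThan_telescope')
  finally have "sin (a / 2) * (\<Sum>j<n. cos (2 * pi * real m * (t - real j / real n))) = 0" .
  moreover have "sin (a / 2) > 0"
    using assms n by (intro sin_gt_zero) (simp_all add: a_def field_simps)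
  ultimately show ?thesis by simp
qed

lemma cos_harmonic_has_integral_zero:
  assumes "m \<ge> 1"
  shows "((\<lambda>t. cos (2 * pi * real m * (t - c))) has_integral 0) {0..1}"
proof -
  have m: "real m > 0" using assms by simp
  define F where "F t = sin (2 * pi * real m * (t - c)) / (2 * pi * real m)" for t
  have "((\<lambda>t. cos (2 * pi * real m * (t - c))) has_integral (F 1 - F 0)) {0..1}"
  proof (rule fundamental_theorem_of_calculus)
    fix x :: real
    have "(F has_real_derivative cos (2 * pi * real m * (x - c))) (at x within {0..1})"
      using m unfolding F_def by (auto intro!: derivative_eq_intros)
    then show "(F has_vector_derivative cos (2 * pi * real m * (x - c))) (at x within {0..1})"
      by (simp add: has_real_derivative_iff_has_vector_derivative)
  qed simp
  moreover have "F 1 = F 0"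
  proof -
    have "2 * pi * real m * (1 - c) = 2 * pi * real m * (0 - c) + real m * (2 * pi)"
      by (simp add: algebra_simps)
    then show ?thesis by (simp only: F_def sin_add_2pi_multiple)
  qed
  ultimately show ?thesis by simp
qed

section \<open>The Dirichlet kernel\<close>

definition dirichlet :: "nat \<Rightarrow> real \<Rightarrow> real" where
  "dirichlet k x = 1 + 2 * (\<Sum>m = 1..k. cos (2 * pi * real m * x))"

text \<open>The classical closed form \<open>D_k(x) = sin((2k+1) pi x) / sin(pi x)\<close>, cleared of denominators.\<close>

lemma dirichlet_times_sin: "dirichlet k x * sin (pi * x) = sin ((2 * real k + 1) * pi * x)"
proof (induction k)
  case 0
  then show ?case by (simp add: dirichlet_def)
next
  case (Suc k)
  have "2 * cos (2 * pi * real (Suc k) * x) * sin (pi * x)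
      = sin (2 * pi * real (Suc k) * x + pi * x) - sin (2 * pi * real (Suc k) * x - pi * x)"
    by (subst mult.assoc, subst cos_times_sin) simp
  also have "2 * pi * real (Suc k) * x + pi * x = (2 * real (Suc k) + 1) * pi * x"
    by (simp add: algebra_simps)
  also have "2 * pi * real (Suc k) * x - pi * x = (2 * real k + 1) * pi * x"
    by (simp add: algebra_simps)
  finally show ?case using Suc by (simp add: dirichlet_def algebra_simps)
qed

lemma dirichlet_at_int:
  assumes "x \<in> \<int>"
  shows "dirichlet k x = 2 * real k + 1"
proof -
  obtain i where i: "x = of_int i" using assms by (auto elim: Ints_cases)
  have "cos (2 * pi * real m * x) = 1" for m
  proof -
    have "2 * pi * real m * x = (2 * pi) * of_int (int m * i)" by (simp add: i)
    then show ?thesis by (simp only: cos_int_2pin)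
  qed
  then show ?thesis by (simp add: dirichlet_def)
qed

lemma dirichlet_has_integral: "((\<lambda>t. dirichlet k (t - c)) has_integral 1) {0..1}"
proof -
  have "((\<lambda>t. 1 + 2 * (\<Sum>m = 1..k. cos (2 * pi * real m * (t - c))))
          has_integral (1 + 2 * (\<Sum>m = 1..k. 0))) {0..1}"
    using has_integral_const_real[of "1::real" 0 1]
    by (intro has_integral_add has_integral_mult_right has_integral_sum
          cos_harmonic_has_integral_zero) auto
  then show ?thesis by (simp add: dirichlet_def)
qed

text \<open>Sampling \<open>D_k\<close> at the \<open>n\<close> translates by multiples of \<open>1/n\<close> kills every harmonic of order
  \<open>1 \<le> m \<le> k < n\<close>, leaving only the constant term.\<close>

lemma dirichlet_equispaced_sum:
  assumes "k < n"
  shows "(\<Sum>j<n. dirichlet k (t - real j / real n)) = real n"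
proof -
  have "(\<Sum>j<n. dirichlet k (t - real j / real n))
      = real n + 2 * (\<Sum>j<n. \<Sum>m = 1..k. cos (2 * pi * real m * (t - real j / real n)))"
    by (simp add: dirichlet_def sum.distrib sum_distrib_left)
  also have "(\<Sum>j<n. \<Sum>m = 1..k. cos (2 * pi * real m * (t - real j / real n)))
      = (\<Sum>m = 1..k. \<Sum>j<n. cos (2 * pi * real m * (t - real j / real n)))"
    by (rule sum.swap)
  also have "(\<Sum>m = 1..k. \<Sum>j<n. cos (2 * pi * real m * (t - real j / real n))) = 0"
    using assms by (intro sum.neutral ballI sum_cos_equispaced) auto
  finally show ?thesis by simp
qed

section \<open>The Fejer kernel\<close>

definition fejer :: "nat \<Rightarrow> real \<Rightarrow> real" where
  "fejer n x = (\<Sum>k<n. dirichlet k x) / real n"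

lemma fejer_closed_form:
  "fejer n x = (if x \<in> \<int> then real n else (sin (pi * real n * x))\<^sup>2 / (real n * (sin (pi * x))\<^sup>2))"
proof (cases "x \<in> \<int>")
  case True
  have "(\<Sum>k<n. 2 * real k + 1) = (real n)\<^sup>2"
    by (induction n) (auto simp: power2_eq_square algebra_simps)
  then show ?thesis using True by (simp add: fejer_def dirichlet_at_int power2_eq_square)
next
  case False
  have "sin (pi * x) \<noteq> 0"
  proof
    assume "sin (pi * x) = 0"
    then obtain i :: int where "pi * x = of_int i * pi" by (auto simp: sin_zero_iff_int2)
    then have "x = of_int i" by simp
    then show False using False by simp
  qed
  have "(\<Sum>k<n. dirichlet k x) * (sin (pi * x))\<^sup>2
      = (\<Sum>k<n. sin ((2 * real k + 1) * (pi * x)) * sin (pi * x))"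
    by (simp add: sum_distrib_right power2_eq_square dirichlet_times_sin mult.assoc [symmetric])
  also have "\<dots> = (sin (real n * (pi * x)))\<^sup>2"
    by (rule sum_sin_odd_multiples)
  also have "real n * (pi * x) = pi * real n * x"
    by (simp add: ac_simps)
  finally have "(\<Sum>k<n. dirichlet k x) * (sin (pi * x))\<^sup>2 = (sin (pi * real n * x))\<^sup>2" .
  then show ?thesis using False \<open>sin (pi * x) \<noteq> 0\<close>
    by (cases "n = 0") (simp_all add: fejer_def field_simps)
qed

lemma f_r_eq_fejer: "f_r r = fejer (2 ^ r)"
  by (rule ext) (simp add: f_r_def fejer_closed_form)

lemma fejer_nonneg: "fejer n x \<ge> 0"
  by (simp add: fejer_closed_form)

lemma fejer_continuous: "continuous_on S (fejer n)"
  unfolding fejer_def dirichlet_def divide_inverse by (intro continuous_intros)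

lemma fejer_shift_integrable: "(\<lambda>t. fejer n (t - c)) integrable_on {a..b}"
  by (intro integrable_continuous_real continuous_on_compose2[OF fejer_continuous[of UNIV]]
        continuous_intros) auto

lemma fejer_has_integral:
  assumes "n \<ge> 1"
  shows "((\<lambda>t. fejer n (t - c)) has_integral 1) {0..1}"
proof -
  have "((\<lambda>t. (\<Sum>k<n. dirichlet k (t - c)) / real n) has_integral ((\<Sum>k<n. 1) / real n)) {0..1}"
    by (intro has_integral_divide has_integral_sum dirichlet_has_integral) auto
  then show ?thesis using assms by (simp add: fejer_def)
qed

text \<open>The \<open>n\<close> translates of the Fejer kernel of order \<open>n\<close> by multiples of \<open>1/n\<close> sum to \<open>n\<close>:
  in quantum phase estimation, the outcome probabilities sum to one.\<close>

lemma fejer_equispaced_sum: "(\<Sum>j<n. fejer n (t - real j / real n)) = real n"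
proof -
  have "(\<Sum>j<n. fejer n (t - real j / real n))
      = (\<Sum>k<n. \<Sum>j<n. dirichlet k (t - real j / real n)) / real n"
    unfolding fejer_def sum_divide_distrib[symmetric] by (subst sum.swap) (rule refl)
  also have "\<dots> = (\<Sum>k<n. real n) / real n"
    by (simp add: dirichlet_equispaced_sum del: of_nat_sum)
  finally show ?thesis by simp
qed

lemma fejer_le_inverse_sin_square:
  assumes "x \<notin> \<int>"
  shows "fejer n x \<le> (1 / real n) / (sin (pi * x))\<^sup>2"
  using assms by (simp add: fejer_closed_form divide_right_mono abs_square_le_1)

section \<open>Tail integrals of the Fejer kernel\<close>

text \<open>Jordan-type inequality \<open>y cos y \<le> sin y\<close> on \<open>[0, pi/2]\<close>, i.e. \<open>cot y \<le> 1/y\<close>: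
  the derivative of \<open>sin y - y cos y\<close> is \<open>y sin y \<ge> 0\<close>.\<close>

lemma cot_le_inverse:
  assumes "0 < y" "y \<le> pi / 2"
  shows "cot y \<le> 1 / y"
proof -
  have "(\<lambda>t. sin t - t * cos t) 0 \<le> (\<lambda>t. sin t - t * cos t) y"
  proof (rule DERIV_nonneg_imp_nondecreasing[OF less_imp_le[OF assms(1)]])
    fix x :: real assume x: "0 \<le> x" "x \<le> y"
    have "DERIV (\<lambda>t. sin t - t * cos t) x :> x * sin x"
      by (auto intro!: derivative_eq_intros simp: algebra_simps)
    moreover have "x * sin x \<ge> 0" using x assms by (intro mult_nonneg_nonneg sin_ge_zero) auto
    ultimately show "\<exists>d. DERIV (\<lambda>t. sin t - t * cos t) x :> d \<and> d \<ge> 0" by blast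
  qed
  moreover have "sin y > 0" using assms by (intro sin_gt_zero) auto
  ultimately show ?thesis using assms by (simp add: cot_def field_simps)
qed

text \<open>Integrating the bound \<open>(1/n) / sin^2\<close> exactly (its antiderivative is a multiple of \<open>cot\<close>)
  controls the mass of a translate of the kernel away from its peak.\<close>

lemma fejer_tail_integral_le:
  assumes c: "0 < c" "c < W" "W \<le> 1"
  shows "integral {W..1} (\<lambda>t. fejer n (t - c)) \<le> (1 / real n) / pi * (cot (pi * (W - c)) + cot (pi * c))"
proof -
  define \<kappa> where "\<kappa> = 1 / real n"
  define h where "h t = \<kappa> / (sin (pi * (t - c)))\<^sup>2" for t
  define H where "H = (\<lambda>t. - (\<kappa> / pi) * cot (pi * (t - c)))"
  have sin_pos: "sin (pi * (t - c)) > 0" if "t \<in> {W..1}" for t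
    using that c by (intro sin_gt_zero) auto
  have "(h has_integral (H 1 - H W)) {W..1}"
  proof (rule fundamental_theorem_of_calculus)
    fix x :: real assume x: "x \<in> {W..1}"
    have "DERIV cot (pi * (x - c)) :> - inverse ((sin (pi * (x - c)))\<^sup>2)"
      using sin_pos[OF x] by (intro DERIV_cot) simp
    moreover have "((\<lambda>t. pi * (t - c)) has_real_derivative pi) (at x within {W..1})"
      by (auto intro!: derivative_eq_intros)
    ultimately have "((\<lambda>t. cot (pi * (t - c))) has_real_derivative - inverse ((sin (pi * (x - c)))\<^sup>2) * pi)
        (at x within {W..1})"
      by (rule DERIV_chain2)
    from DERIV_cmult[OF this, of "- (\<kappa> / pi)"]
    have "(H has_real_derivative h x) (at x within {W..1})"
      by (simp add: H_def h_def field_simps)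
    then show "(H has_vector_derivative h x) (at x within {W..1})"
      by (simp add: has_real_derivative_iff_has_vector_derivative)
  qed (use c in simp)
  moreover have "fejer n (t - c) \<le> h t" if t: "t \<in> {W..1}" for t
  proof -
    have "t - c \<notin> \<int>"
    proof
      assume "t - c \<in> \<int>"
      then have "sin (pi * (t - c)) = 0"
        by (auto elim!: Ints_cases simp: sin_zero_iff_int2 mult.commute)
      then show False using sin_pos[OF t] by simp
    qed
    then show ?thesis unfolding h_def \<kappa>_def by (rule fejer_le_inverse_sin_square)
  qed
  ultimately have "integral {W..1} (\<lambda>t. fejer n (t - c)) \<le> H 1 - H W"
    by (intro has_integral_le[OF integrable_integral[OF fejer_shift_integrable]]) auto
  moreover have "cot (pi * (1 - c)) = - cot (pi * c)"
  proof -
    have "pi * (1 - c) = pi - pi * c" by (simp add: algebra_simps)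
    then show ?thesis by (simp add: cot_def)
  qed
  ultimately show ?thesis by (simp add: H_def \<kappa>_def algebra_simps)
qed

lemma fejer_tail_integral_grid:
  assumes "1 \<le> k" "k < m" "2 * m \<le> n"
  shows "integral {real m / real n..1} (\<lambda>t. fejer n (t - real k / real n))
           \<le> (1 / real k + 1 / real (m - k)) / pi\<^sup>2"
proof -
  define W where "W = real m / real n"
  define c where "c = real k / real n"
  have n: "real n \<ge> 2 * real m" using assms(3) by linarith
  have k: "real k > 0" "real (m - k) = real m - real k" "real m - real k > 0"
    using assms by auto
  have c0: "0 < c" using k n by (simp add: c_def)
  have cW: "c < W" using assms n by (simp add: c_def W_def divide_strict_right_mono)
  have W_half: "W \<le> 1 / 2" using n k by (simp add: W_def field_simps)
  have "integral {W..1} (\<lambda>t. fejer n (t - c)) \<le> (1 / real n) / pi * (cot (pi * (W - c)) + cot (pi * c))"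
    using c0 cW W_half by (intro fejer_tail_integral_le) auto
  also have "\<dots> \<le> (1 / real n) / pi * (1 / (pi * (W - c)) + 1 / (pi * c))"
    using c0 cW W_half by (intro mult_left_mono add_mono cot_le_inverse) auto
  also have "\<dots> = (1 / real k + 1 / real (m - k)) / pi\<^sup>2"
    using k n by (simp add: W_def c_def field_simps power2_eq_square)
  finally show ?thesis by (simp add: W_def c_def)
qed

lemma sum_inverse_le_one_plus_ln:
  assumes "m \<ge> 1"
  shows "(\<Sum>k = 1..<m. 1 / real k) \<le> 1 + ln (real m)"
proof -
  have "(\<Sum>k = 1..<m. 1 / real k) \<le> harm m"
    unfolding harm_def inverse_eq_divide by (intro sum_mono2) auto
  also have "harm m - ln (real m) \<le> harm 1 - ln (real (1::nat))"
    using assms by (intro euler_mascheroni_sequence_decreasing) auto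
  then have "harm m \<le> 1 + ln (real m)" by (simp add: harm_def)
  finally show ?thesis .
qed

section \<open>Windows of translated Fejer kernels\<close>

definition window :: "nat \<Rightarrow> nat \<Rightarrow> real \<Rightarrow> real" where
  "window n m \<phi> = (\<Sum>k = 0..m. fejer n (\<phi> - real k / real n))"

lemma window_nonneg: "window n m \<phi> \<ge> 0"
  unfolding window_def by (intro sum_nonneg fejer_nonneg)

lemma window_integrable: "window n m integrable_on {a..b}"
  unfolding window_def by (intro integrable_sum fejer_shift_integrable) auto

text \<open>A window shorter than a full period is bounded by the sum over all \<open>n\<close> translates.\<close>

lemma window_le:
  assumes "m < n"
  shows "window n m \<phi> \<le> real n"
proof -
  have "window n m \<phi> \<le> (\<Sum>j<n. fejer n (\<phi> - real j / real n))"
    unfolding window_def using assms by (intro sum_mono2 fejer_nonneg) auto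
  then show ?thesis by (simp add: fejer_equispaced_sum)
qed

lemma window_has_integral:
  assumes "n \<ge> 1"
  shows "(window n m has_integral (real m + 1)) {0..1}"
proof -
  have "(window n m has_integral (\<Sum>k = 0..m. 1)) {0..1}"
    unfolding window_def using assms by (intro has_integral_sum fejer_has_integral) auto
  then show ?thesis by (simp add: add.commute)
qed

text \<open>The mass of the window beyond \<open>[0, m/n]\<close>: the two extreme translates
  contribute at most their total mass 1 each, the interior ones a harmonic sum.\<close>

lemma window_tail_integral_le:
  assumes "1 \<le> m" "2 * m \<le> n"
  shows "integral {real m / real n..1} (window n m) \<le> 2 + 2 * (1 + ln (real m)) / pi\<^sup>2"
proof -
  define A where "A k = integral {real m / real n..1} (\<lambda>t. fejer n (t - real k / real n))" for k
  have "(window n m has_integral (\<Sum>k = 0..m. A k)) {real m / real n..1}"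
    unfolding window_def A_def
    by (intro has_integral_sum integrable_integral fejer_shift_integrable) auto
  then have tail: "integral {real m / real n..1} (window n m) = (\<Sum>k = 0..m. A k)"
    by (rule integral_unique)
  have A_le_1: "A k \<le> 1" for k
  proof -
    have "A k \<le> integral {0..1} (\<lambda>t. fejer n (t - real k / real n))"
      unfolding A_def using assms
      by (intro integral_subset_le fejer_shift_integrable) (auto simp: field_simps fejer_nonneg)
    also have "\<dots> = 1" using assms by (intro integral_unique fejer_has_integral) auto
    finally show ?thesis .
  qed
  have "(\<Sum>k = 1..<m. A k) \<le> (\<Sum>k = 1..<m. (1 / real k + 1 / real (m - k)) / pi\<^sup>2)"
    unfolding A_def using assms by (intro sum_mono fejer_tail_integral_grid) auto
  also have "\<dots> = ((\<Sum>k = 1..<m. 1 / real k) + (\<Sum>k = 1..<m. 1 / real (m - k))) / pi\<^sup>2"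
    by (simp only: sum_divide_distrib[symmetric] sum.distrib)
  also have "(\<Sum>k = 1..<m. 1 / real (m - k)) = (\<Sum>k = 1..<m. 1 / real k)"
    by (rule sum.reindex_bij_witness[where i="\<lambda>k. m - k" and j="\<lambda>k. m - k"]) auto
  also have "((\<Sum>k = 1..<m. 1 / real k) + (\<Sum>k = 1..<m. 1 / real k)) / pi\<^sup>2 \<le> 2 * (1 + ln (real m)) / pi\<^sup>2"
    using sum_inverse_le_one_plus_ln[OF assms(1)] by (simp add: divide_right_mono)
  finally have interior: "(\<Sum>k = 1..<m. A k) \<le> 2 * (1 + ln (real m)) / pi\<^sup>2" .
  have "{0..m} = insert 0 (insert m {1..<m})" using assms by auto
  then have "(\<Sum>k = 0..m. A k) = A 0 + A m + (\<Sum>k = 1..<m. A k)"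
    using assms by simp
  then show ?thesis using tail interior A_le_1[of 0] A_le_1[of m] by linarith
qed

section \<open>Distance to a step function\<close>

text \<open>If \<open>g \<le> h\<close> on \<open>[0, W)\<close> and \<open>g \<ge> 0\<close> on \<open>[W, 1]\<close>, the \<open>L^1\<close> distance from \<open>g\<close> to the step
  \<open>h 1_[0,W)\<close> is \<open>h W - \<integral>_0^1 g + 2 \<integral>_W^1 g\<close>: on \<open>[0, W)\<close> it is \<open>h W - \<integral>_0^W g\<close>, on \<open>[W, 1]\<close> it is
  \<open>\<integral>_W^1 g\<close>.\<close>

lemma has_integral_abs_diff_step:
  fixes g :: "real \<Rightarrow> real"
  assumes W: "0 \<le> W" "W \<le> 1"
    and below: "\<And>x. 0 \<le> x \<Longrightarrow> x < W \<Longrightarrow> g x \<le> h"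
    and above: "\<And>x. W \<le> x \<Longrightarrow> x \<le> 1 \<Longrightarrow> 0 \<le> g x"
    and total: "(g has_integral I) {0..1}"
    and tail: "(g has_integral A) {W..1}"
  shows "((\<lambda>x. \<bar>g x - (if 0 \<le> x \<and> x < W then h else 0)\<bar>) has_integral (h * W - I + 2 * A)) {0..1}"
proof -
  obtain B where head: "(g has_integral B) {0..W}"
    using integrable_subinterval_real[OF has_integral_integrable[OF total], of 0 W] W by auto
  have I: "I = B + A"
    using has_integral_unique[OF total has_integral_combine[OF W head tail]] .
  have "((\<lambda>x. \<bar>g x - (if 0 \<le> x \<and> x < W then h else 0)\<bar>) has_integral (h * W - B)) {0..W}"
  proof (rule has_integral_spike_finite[of "{W}"])
    show "((\<lambda>x. h - g x) has_integral (h * W - B)) {0..W}"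
      using has_integral_diff[OF has_integral_const_real[of h 0 W] head] W by (simp add: mult.commute)
  qed (use below in auto)
  moreover have "((\<lambda>x. \<bar>g x - (if 0 \<le> x \<and> x < W then h else 0)\<bar>) has_integral A) {W..1}"
    by (rule has_integral_eq[OF _ tail]) (use above in auto)
  ultimately have "((\<lambda>x. \<bar>g x - (if 0 \<le> x \<and> x < W then h else 0)\<bar>) has_integral (h * W - B + A)) {0..1}"
    by (rule has_integral_combine[OF W])
  then show ?thesis using I by (simp add: algebra_simps)
qed

lemma powr_two_diff:
  assumes "q \<le> r"
  shows "2 powr (real q - real r + a) = 2 powr a / 2 ^ (r - q)"
proof -
  have "real q - real r + a = a - real (r - q)" using assms by simp
  then have "2 powr (real q - real r + a) = 2 powr a / 2 powr real (r - q)"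
    by (simp only: powr_diff)
  also have "(2::real) powr real (r - q) = 2 ^ (r - q)"
    by (rule powr_realpow) simp
  finally show ?thesis .
qed

lemma F_rq_eq_window:
  assumes "q \<le> r"
  shows "F_rq r q \<phi> = window (2 ^ r) (2 ^ (r - q)) \<phi> / 2 ^ (r - q)"
  using powr_two_diff[OF assms, of 0]
  by (simp add: F_rq_def window_def f_r_eq_fejer)

text \<open>The final arithmetic, using \<open>4 \<le> pi^2\<close>.\<close>

lemma l1_bound_arith:
  fixes N A :: real
  assumes "N \<ge> 1" "A \<le> 2 + 2 * (1 + ln N) / pi\<^sup>2"
  shows "1 - (N + 1) / N + 2 * (A / N) \<le> 4 / N * (1 + ln N / pi\<^sup>2)"
proof -
  have "(2::real)\<^sup>2 \<le> pi\<^sup>2" using pi_gt3 by (intro power_mono) auto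
  then have "4 / pi\<^sup>2 \<le> 1" by simp
  then have "2 * A - 1 \<le> 4 * (1 + ln N / pi\<^sup>2)"
    using assms(2) by (simp add: field_simps)
  moreover have "1 - (N + 1) / N + 2 * (A / N) = (2 * A - 1) / N"
    using assms(1) by (simp add: field_simps)
  ultimately show ?thesis using assms(1) by (simp add: divide_right_mono)
qed

text \<open>The theorem: with \<open>n = 2^r\<close> and \<open>N = 2^(r-q)\<close>, the step \<open>G_q\<close> has height \<open>2^q = n/N\<close> and
  width \<open>N/n\<close>; the distance to \<open>F_rq = window n N / N\<close> is \<open>(2 A - 1)/N\<close>, where \<open>A\<close> is the tail mass
  of the window.\<close>

theorem mainTheorem4:
  fixes q r :: nat
  assumes "1 \<le> q" and "q \<le> r"
  shows "(\<lambda>\<phi>. \<bar>F_rq r q \<phi> - G_q q \<phi>\<bar>) integrable_on {0..1} \<and>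
         integral {0..1} (\<lambda>\<phi>. \<bar>F_rq r q \<phi> - G_q q \<phi>\<bar>)
           \<le> 2 powr (real q - real r + 2) * (1 + ln (2 ^ (r - q)) / pi\<^sup>2)"
proof -
  define n :: nat where "n = 2 ^ r"
  define N :: nat where "N = 2 ^ (r - q)"
  define A where "A = integral {real N / real n..1} (window n N)"
  have n_eq: "real n = real N * 2 ^ q"
    using assms(2) by (simp add: n_def N_def flip: power_add)
  have N: "1 \<le> N" "2 * N \<le> n"
    using assms n_eq by (simp_all add: N_def n_def flip: power_Suc)
  have F: "F_rq r q = (\<lambda>\<phi>. window n N \<phi> / real N)"
    using F_rq_eq_window[OF assms(2)] by (auto simp: n_def N_def)
  have G: "G_q q = (\<lambda>\<phi>. if 0 \<le> \<phi> \<and> \<phi> < real N / real n then 2 ^ q else 0)"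
    using N n_eq by (auto simp: G_q_def)
  have "((\<lambda>\<phi>. \<bar>F_rq r q \<phi> - G_q q \<phi>\<bar>) has_integral
          (2 ^ q * (real N / real n) - (real N + 1) / real N + 2 * (A / real N))) {0..1}"
    unfolding F G
  proof (rule has_integral_abs_diff_step)
    show "window n N \<phi> / real N \<le> 2 ^ q" for \<phi>
      using window_le[of N n \<phi>] N n_eq by (simp add: field_simps)
    show "((\<lambda>\<phi>. window n N \<phi> / real N) has_integral (real N + 1) / real N) {0..1}"
      using N by (intro has_integral_divide window_has_integral) simp
    show "((\<lambda>\<phi>. window n N \<phi> / real N) has_integral A / real N) {real N / real n..1}"
      unfolding A_def by (intro has_integral_divide integrable_integral window_integrable)
  qed (use N in \<open>auto simp: window_nonneg\<close>)
  moreover have "A \<le> 2 + 2 * (1 + ln (real N)) / pi\<^sup>2"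
    unfolding A_def using N by (rule window_tail_integral_le)
  ultimately show ?thesis
    using l1_bound_arith[of N A] N n_eq powr_two_diff[OF assms(2), of 2]
    by (auto simp: integral_unique N_def)
qed

end
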